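(* A deformation $\mathbf{y}\in H^1(\Omega;\mathbb{R}^3)$ satisfies $\nabla\mathbf{y}^T\nabla\mathbf{y}=g$ a.e. in $\Omega$ (i.e. $\mathbf{y}$ is an isometric immersion of $g$), where $$g=\lambda^2\,\mathbf{m}\otimes\mathbf{m}+\lambda^{-1}\,\mathbf{m}_\perp\otimes\mathbf{m}_\perp,$$ if and only if $\mathbf{y}$ is a global minimizer of $E_{str}$ over $H^1(\Omega;\mathbb{R}^3)$ with $E_{str}[\mathbf{y}]=0$.
   Context: Let $\Omega\subset\mathbb{R}^2$ be a bounded Lipschitz domain, $s,s_0\in L^\infty(\Omega)$ with $-1<s,s_0$ in $\Omega$, $\lambda=\big(\tfrac{s+1}{s_0+1}\big)^{1/3}$, $\mathbf{m}:\Omega\to\mathbb{S}^1$ the blueprinted director field and $\mathbf{m}_\perp:\Omega\to\mathbb{S}^1$ a field perpendicular to $\mathbf{m}$ everywhere. For $\mathbf{x}'\in\Omega$ and $\mathbf{F}\in\mathbb{R}^{3\times2}$ of rank 2, let $\mathrm{I}(\mathbf{F})=\mathbf{F}^T\mathbf{F}$, $J(\mathbf{F})=\det\mathrm{I}(\mathbf{F})$, $C_{\mathbf{m}}(\mathbf{F})=\mathbf{m}(\mathbf{x}')\cdot\mathrm{I}(\mathbf{F})\mathbf{m}(\mathbf{x}')$, and $$W_{str}(\mathbf{x}',\mathbf{F})=\lambda\Big[\frac{1}{J(\mathbf{F})}+\frac{1}{s+1}\Big(\operatorname{tr}\mathrm{I}(\mathbf{F})+s_0\,C_{\mathbf{m}}(\mathbf{F})+s\,\frac{J(\mathbf{F})}{C_{\mathbf{m}}(\mathbf{F})}\Big)\Big]-3,$$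 with $s,s_0,\lambda$ evaluated at $\mathbf{x}'$. The stretching energy is $E_{str}[\mathbf{y}]=\int_\Omega W_{str}(\mathbf{x}',\nabla\mathbf{y}(\mathbf{x}'))\,d\mathbf{x}'$ for $\mathbf{y}\in H^1(\Omega;\mathbb{R}^3)$. *)

theory Defs
  imports "HOL-Analysis.Analysis"
begin

text \<open>Points of the plane are \<open>real^2\<close>; deformations take values in \<open>real^3\<close>;
  deformation gradients are 3x2 matrices \<open>real^2^3\<close> (rows indexed by 3, columns by 2).\<close>

definition lipschitz_boundary :: "(real^2) set \<Rightarrow> bool" where
  "lipschitz_boundary \<Omega> \<longleftrightarrow>
     (\<forall>p \<in> frontier \<Omega>. \<exists>r>0. \<exists>Q::real^2^2. \<exists>h::real \<Rightarrow> real. \<exists>L.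
        orthogonal_matrix Q \<and> L-lipschitz_on UNIV h \<and>
        (\<forall>x \<in> ball p r. x \<in> \<Omega> \<longleftrightarrow> (Q *v (x - p)) $ 2 > h ((Q *v (x - p)) $ 1)))"

definition bounded_lipschitz_domain :: "(real^2) set \<Rightarrow> bool" where
  "bounded_lipschitz_domain \<Omega> \<longleftrightarrow>
     open \<Omega> \<and> connected \<Omega> \<and> \<Omega> \<noteq> {} \<and> bounded \<Omega> \<and> lipschitz_boundary \<Omega>"

definition Linf_on :: "(real^2) set \<Rightarrow> (real^2 \<Rightarrow> real) \<Rightarrow> bool" where
  "Linf_on \<Omega> f \<longleftrightarrow> (\<lambda>x. indicator \<Omega> x * f x) \<in> borel_measurable lebesgue \<and>
     (\<exists>C. AE x in lebesgue. x \<in> \<Omega> \<longrightarrow> \<bar>f x\<bar> \<le> C)"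

definition L2_on :: "(real^2) set \<Rightarrow> (real^2 \<Rightarrow> real) \<Rightarrow> bool" where
  "L2_on \<Omega> f \<longleftrightarrow> (\<lambda>x. indicator \<Omega> x * f x) \<in> borel_measurable lebesgue \<and>
     integrable lebesgue (\<lambda>x. indicator \<Omega> x * (f x)\<^sup>2)"

text \<open>\<open>C^\<infinity>\<close> functions on the plane (greatest fixed point: differentiable everywhere and
  all partial derivatives again \<open>C^\<infinity>\<close>).\<close>
coinductive smooth :: "(real^2 \<Rightarrow> real) \<Rightarrow> bool" where
  "(\<forall>x. f differentiable (at x)) \<Longrightarrow>
   (\<forall>j. smooth (\<lambda>x. frechet_derivative f (at x) (axis j 1))) \<Longrightarrow> smooth f"

definition partial :: "(real^2 \<Rightarrow> real) \<Rightarrow> 2 \<Rightarrow> real^2 \<Rightarrow> real" where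
  "partial \<phi> j x = frechet_derivative \<phi> (at x) (axis j 1)"

definition test_fun :: "(real^2) set \<Rightarrow> (real^2 \<Rightarrow> real) \<Rightarrow> bool" where
  "test_fun \<Omega> \<phi> \<longleftrightarrow> smooth \<phi> \<and> compact (closure {x. \<phi> x \<noteq> 0}) \<and>
     closure {x. \<phi> x \<noteq> 0} \<subseteq> \<Omega>"

definition is_H1_grad :: "(real^2) set \<Rightarrow> (real^2 \<Rightarrow> real^3) \<Rightarrow> (real^2 \<Rightarrow> real^2^3) \<Rightarrow> bool" where
  "is_H1_grad \<Omega> y Dy \<longleftrightarrow>
     (\<forall>i. L2_on \<Omega> (\<lambda>x. y x $ i)) \<and> (\<forall>i j. L2_on \<Omega> (\<lambda>x. Dy x $ i $ j)) \<and>
     (\<forall>i j \<phi>. test_fun \<Omega> \<phi> \<longrightarrow>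
        set_lebesgue_integral lebesgue \<Omega> (\<lambda>x. y x $ i * partial \<phi> j x) =
        - set_lebesgue_integral lebesgue \<Omega> (\<lambda>x. Dy x $ i $ j * \<phi> x))"

definition H1 :: "(real^2) set \<Rightarrow> (real^2 \<Rightarrow> real^3) \<Rightarrow> bool" where
  "H1 \<Omega> y \<longleftrightarrow> (\<exists>Dy. is_H1_grad \<Omega> y Dy)"

text \<open>The (weak) gradient of an \<open>H^1\<close> map (determined up to a null set).\<close>
definition grad :: "(real^2) set \<Rightarrow> (real^2 \<Rightarrow> real^3) \<Rightarrow> real^2 \<Rightarrow> real^2^3" where
  "grad \<Omega> y = (SOME Dy. is_H1_grad \<Omega> y Dy)"

definition lam :: "real \<Rightarrow> real \<Rightarrow> real" where
  "lam s s0 = ((s + 1) / (s0 + 1)) powr (1/3)"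

definition fform :: "real^2^3 \<Rightarrow> real^2^2" where
  "fform F = transpose F ** F"

definition Jf :: "real^2^3 \<Rightarrow> real" where
  "Jf F = det (fform F)"

definition Cm :: "real^2 \<Rightarrow> real^2^3 \<Rightarrow> real" where
  "Cm m F = m \<bullet> (fform F *v m)"

text \<open>Stretching energy density; defined as \<open>+\<infinity>\<close> for rank-deficient \<open>F\<close>
  (where the formula is undefined).\<close>
definition W_str :: "real \<Rightarrow> real \<Rightarrow> real^2 \<Rightarrow> real^2^3 \<Rightarrow> ereal" where
  "W_str s s0 m F =
     (if rank F = 2 then
        ereal (lam s s0 * (1 / Jf F + (1 / (s + 1)) *
                 (trace (fform F) + s0 * Cm m F + s * Jf F / Cm m F)) - 3)
      else \<infinity>)"

definition E_str :: "(real^2) set \<Rightarrow> (real^2 \<Rightarrow> real) \<Rightarrow> (real^2 \<Rightarrow> real) \<Rightarrow> (real^2 \<Rightarrow> real^2)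
    \<Rightarrow> (real^2 \<Rightarrow> real^3) \<Rightarrow> ereal" where
  "E_str \<Omega> s s0 m y =
     enn2ereal (\<integral>\<^sup>+ x. indicator \<Omega> x * e2ennreal (W_str (s x) (s0 x) (m x) (grad \<Omega> y x)) \<partial>lebesgue)
   - enn2ereal (\<integral>\<^sup>+ x. indicator \<Omega> x * e2ennreal (- W_str (s x) (s0 x) (m x) (grad \<Omega> y x)) \<partial>lebesgue)"

definition outer2 :: "real^2 \<Rightarrow> real^2 \<Rightarrow> real^2^2" where
  "outer2 a b = (\<chi> i j. a $ i * b $ j)"

definition gmetric :: "real \<Rightarrow> real \<Rightarrow> real^2 \<Rightarrow> real^2 \<Rightarrow> real^2^2" where
  "gmetric s s0 m mp = (lam s s0)\<^sup>2 *\<^sub>R outer2 m m + inverse (lam s s0) *\<^sub>R outer2 mp mp"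

end

theory Submission
  imports Defs
begin

text \<open>Write a deformation gradient \<open>F\<close> in the orthonormal frame \<open>(m, m\<^sub>\<bottom>)\<close>:
  with \<open>a = |F m|\<^sup>2\<close>, \<open>b = |F m\<^sub>\<bottom>|\<^sup>2\<close>, \<open>c = F m \<bullet> F m\<^sub>\<bottom>\<close> one has \<open>J = a b - c\<^sup>2\<close>,
  \<open>tr I = a + b\<close> and \<open>C\<^sub>m = a\<close>, while \<open>I = g\<close> means \<open>a = \<lambda>\<^sup>2\<close>, \<open>b = \<lambda>\<^sup>-\<^sup>1\<close>, \<open>c = 0\<close>.
  Putting \<open>a = \<lambda>\<^sup>2 \<alpha>\<close> and \<open>J = \<lambda> t\<^sup>2\<close> and using \<open>\<lambda>\<^sup>3 (s\<^sub>0 + 1) = s + 1\<close>, the energy density becomes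
  \<open>(\<alpha> - t)\<^sup>2/\<alpha> + (t - 1)\<^sup>2 (2t + 1)/t\<^sup>2 + \<lambda> c\<^sup>2/(a (s + 1))\<close>, a sum of nonnegative terms
  vanishing exactly when \<open>\<alpha> = t = 1\<close> and \<open>c = 0\<close>. So \<open>W\<^sub>s\<^sub>t\<^sub>r \<ge> 0\<close> with equality precisely where
  \<open>\<nabla>y\<^sup>T\<nabla>y = g\<close>; hence \<open>E\<^sub>s\<^sub>t\<^sub>r \<ge> 0\<close>, and \<open>E\<^sub>s\<^sub>t\<^sub>r[y] = 0\<close> iff \<open>\<nabla>y\<^sup>T\<nabla>y = g\<close> almost everywhere.\<close>

lemma gram_mult_eq_0_iff:
  fixes F :: "real^'n^'m"
  shows "(transpose F ** F) *v x = 0 \<longleftrightarrow> F *v x = 0"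
proof
  assume "(transpose F ** F) *v x = 0"
  then have "(F *v x) \<bullet> (F *v x) = 0"
    by (metis dot_lmul_matrix inner_zero_right matrix_vector_mul_assoc vector_transpose_matrix)
  then show "F *v x = 0" by simp
qed (simp flip: matrix_vector_mul_assoc)

lemma rank_eq_ncols_iff_det_gram:
  fixes F :: "real^'n^'m"
  shows "rank F = CARD('n) \<longleftrightarrow> det (transpose F ** F) \<noteq> 0"
  using matrix_nonfull_linear_equations_eq[of F] matrix_nonfull_linear_equations_eq[of "transpose F ** F"]
    det_eq_0_rank[of "transpose F ** F"] rank_bound[of "transpose F ** F"]
  by (auto simp: gram_mult_eq_0_iff)

lemma det_orthogonal_congruence:
  fixes A Q :: "real^'n^'n"
  assumes "orthogonal_matrix Q"
  shows "det (Q ** A ** transpose Q) = det A"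
proof -
  have "det Q * det Q = 1" using det_orthogonal_matrix[OF assms] by auto
  then show ?thesis by (simp add: det_mul)
qed

lemma trace_orthogonal_congruence:
  fixes A Q :: "real^'n^'n"
  assumes "orthogonal_matrix Q"
  shows "trace (Q ** A ** transpose Q) = trace A"
  using assms by (metis matrix_mul_assoc matrix_mul_rid orthogonal_matrix_def trace_mul_sym)

lemma orthogonal_congruence_eq_iff:
  fixes A B Q :: "real^'n^'n"
  assumes "orthogonal_matrix Q"
  shows "Q ** A ** transpose Q = Q ** B ** transpose Q \<longleftrightarrow> A = B"
  using assms by (metis matrix_mul_assoc matrix_mul_lid matrix_mul_rid orthogonal_matrix_def)

lemma congruence_component:
  "(Q ** A ** transpose Q) $ i $ j = Q $ i \<bullet> (A *v Q $ j)"
  by (simp add: matrix_matrix_mult_def matrix_vector_mult_def transpose_def column_def inner_vec_def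
      sum_distrib_left sum_distrib_right algebra_simps) (subst sum.swap, simp add: ac_simps)

lemma orthogonal_matrix_frame:
  fixes u v :: "real^2"
  assumes "norm u = 1" "norm v = 1" "u \<bullet> v = 0"
  shows "orthogonal_matrix (vector [u, v] :: real^2^2)"
  using assms by (auto simp: orthogonal_matrix_orthonormal_rows forall_2 orthogonal_def inner_commute row_def)

lemma matrix_eq_iff_orthonormal_frame:
  fixes A B :: "real^2^2"
  assumes "norm u = 1" "norm v = 1" "u \<bullet> v = 0"
  shows "A = B \<longleftrightarrow> u \<bullet> (A *v u) = u \<bullet> (B *v u) \<and> u \<bullet> (A *v v) = u \<bullet> (B *v v) \<and>
                   v \<bullet> (A *v u) = v \<bullet> (B *v u) \<and> v \<bullet> (A *v v) = v \<bullet> (B *v v)"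
proof -
  let ?Q = "vector [u, v] :: real^2^2"
  have "A = B \<longleftrightarrow> ?Q ** A ** transpose ?Q = ?Q ** B ** transpose ?Q"
    by (simp add: orthogonal_congruence_eq_iff orthogonal_matrix_frame assms)
  then show ?thesis
    by (simp add: vec_eq_iff forall_2 congruence_component)
qed

lemma inner_fform: "u \<bullet> (fform F *v v) = (F *v u) \<bullet> (F *v v)"
  by (metis dot_lmul_matrix fform_def matrix_vector_mul_assoc vector_transpose_matrix)

lemma Cm_eq_inner: "Cm m F = (F *v m) \<bullet> (F *v m)"
  by (simp add: Cm_def inner_fform)

lemma Jf_orthonormal_frame:
  assumes "norm u = 1" "norm v = 1" "u \<bullet> v = 0"
  shows "Jf F = ((F *v u) \<bullet> (F *v u)) * ((F *v v) \<bullet> (F *v v)) - ((F *v u) \<bullet> (F *v v))\<^sup>2"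
proof -
  let ?Q = "vector [u, v] :: real^2^2"
  have "Jf F = det (?Q ** fform F ** transpose ?Q)"
    by (simp add: Jf_def det_orthogonal_congruence orthogonal_matrix_frame assms)
  then show ?thesis
    by (simp add: det_2 congruence_component inner_fform inner_commute power2_eq_square)
qed

lemma trace_fform_orthonormal_frame:
  assumes "norm u = 1" "norm v = 1" "u \<bullet> v = 0"
  shows "trace (fform F) = (F *v u) \<bullet> (F *v u) + (F *v v) \<bullet> (F *v v)"
proof -
  let ?Q = "vector [u, v] :: real^2^2"
  have "trace (fform F) = trace (?Q ** fform F ** transpose ?Q)"
    by (simp add: trace_orthogonal_congruence orthogonal_matrix_frame assms)
  then show ?thesis
    by (simp add: trace_def sum_2 congruence_component inner_fform)
qed

lemma gmetric_mult_vector: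
  "gmetric s s0 m mp *v v = ((lam s s0)\<^sup>2 * (m \<bullet> v)) *\<^sub>R m + (inverse (lam s s0) * (mp \<bullet> v)) *\<^sub>R mp"
  by (simp add: gmetric_def outer2_def matrix_vector_mult_def inner_vec_def vec_eq_iff
      sum_distrib_left sum.distrib algebra_simps)

lemma fform_eq_gmetric_iff:
  assumes "norm m = 1" "norm mp = 1" "m \<bullet> mp = 0"
  shows "fform F = gmetric s s0 m mp \<longleftrightarrow>
    (F *v m) \<bullet> (F *v m) = (lam s s0)\<^sup>2 \<and> (F *v mp) \<bullet> (F *v mp) = inverse (lam s s0) \<and>
    (F *v m) \<bullet> (F *v mp) = 0"
proof -
  have "m \<bullet> m = 1" "mp \<bullet> mp = 1" using assms by (simp_all add: norm_eq_1)
  then show ?thesis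
    using assms
    by (auto simp: matrix_eq_iff_orthonormal_frame[OF assms] inner_fform gmetric_mult_vector
        inner_commute)
qed

lemma lam_pos: "s > -1 \<Longrightarrow> s0 > -1 \<Longrightarrow> lam s s0 > 0"
  by (simp add: lam_def)

lemma lam_cube:
  assumes "s > -1" "s0 > -1"
  shows "(lam s s0) ^ 3 * (s0 + 1) = s + 1"
proof -
  have q: "(s + 1) / (s0 + 1) > 0" using assms by simp
  have "(lam s s0) ^ 3 = (lam s s0) powr (real 3)"
    using q by (simp add: lam_def powr_realpow)
  also have "\<dots> = (s + 1) / (s0 + 1)" using q assms by (simp add: lam_def powr_powr)
  finally show ?thesis using assms by simp
qed

definition frame_density :: "real \<Rightarrow> real \<Rightarrow> real \<Rightarrow> real \<Rightarrow> real \<Rightarrow> real \<Rightarrow> real" where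
  "frame_density L s s0 a b c =
     L * (1 / (a * b - c\<^sup>2) + 1 / (s + 1) * ((a + b) + s0 * a + s * (a * b - c\<^sup>2) / a)) - 3"

lemma frame_density_sum_of_squares:
  fixes L s s0 a b c :: real
  assumes L: "L > 0" and s: "s > -1" and L3: "L ^ 3 * (s0 + 1) = s + 1"
    and a: "a > 0" and J: "a * b - c\<^sup>2 > 0"
  defines "t \<equiv> sqrt ((a * b - c\<^sup>2) / L)" and "\<alpha> \<equiv> a / L\<^sup>2"
  shows "frame_density L s s0 a b c
           = (\<alpha> - t)\<^sup>2 / \<alpha> + (t - 1)\<^sup>2 * (2 * t + 1) / t\<^sup>2 + L * c\<^sup>2 / (a * (s + 1))"
proof -
  define J where "J = a * b - c\<^sup>2"
  have t: "t > 0" and Jt: "J = L * t\<^sup>2" using J L by (simp_all add: t_def J_def)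
  have "\<alpha> > 0" and aa: "a = L\<^sup>2 * \<alpha>" using a L by (simp_all add: \<alpha>_def)
  have b: "b = (J + c\<^sup>2) / a" using a by (simp add: J_def field_simps)
  have s1: "s + 1 \<noteq> 0" using s by simp
  have "frame_density L s s0 a b c
          = L / J + L * (s0 + 1) * a / (s + 1) + L * J / a + L * c\<^sup>2 / (a * (s + 1)) - 3"
    unfolding frame_density_def J_def[symmetric] b using a J s1
    by (simp add: J_def divide_simps) (simp add: algebra_simps power2_eq_square)
  also have "L * (s0 + 1) * a / (s + 1) = \<alpha>"
    using L3[symmetric] L aa s1 by (simp add: field_simps power2_eq_square power3_eq_cube)
  also have "L / J = 1 / t\<^sup>2" using Jt L t by simp
  also have "L * J / a = t\<^sup>2 / \<alpha>" using Jt aa L by (simp add: field_simps power2_eq_square)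
  finally show ?thesis using t \<open>\<alpha> > 0\<close> by (simp add: field_simps power2_eq_square)
qed

lemma frame_density_nonneg:
  assumes "L > 0" "s > -1" "L ^ 3 * (s0 + 1) = s + 1" "a > 0" "a * b - c\<^sup>2 > 0"
  shows "0 \<le> frame_density L s s0 a b c"
  unfolding frame_density_sum_of_squares[OF assms] using assms
  by (intro add_nonneg_nonneg divide_nonneg_pos mult_nonneg_nonneg) auto

lemma frame_density_eq_0_iff:
  assumes L: "L > 0" and s: "s > -1" and "L ^ 3 * (s0 + 1) = s + 1"
    and a: "a > 0" and J: "a * b - c\<^sup>2 > 0"
  shows "frame_density L s s0 a b c = 0 \<longleftrightarrow> a = L\<^sup>2 \<and> b = inverse L \<and> c = 0"
proof -
  define t where "t = sqrt ((a * b - c\<^sup>2) / L)"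
  define \<alpha> where "\<alpha> = a / L\<^sup>2"
  have t: "t > 0" using J L by (simp add: t_def)
  have \<alpha>: "\<alpha> > 0" using a L by (simp add: \<alpha>_def)
  have "frame_density L s s0 a b c = 0 \<longleftrightarrow>
      (\<alpha> - t)\<^sup>2 / \<alpha> = 0 \<and> (t - 1)\<^sup>2 * (2 * t + 1) / t\<^sup>2 = 0 \<and> L * c\<^sup>2 / (a * (s + 1)) = 0"
  proof -
    have "(\<alpha> - t)\<^sup>2 / \<alpha> \<ge> 0" "(t - 1)\<^sup>2 * (2 * t + 1) / t\<^sup>2 \<ge> 0" "L * c\<^sup>2 / (a * (s + 1)) \<ge> 0"
      using \<alpha> t L a s by simp_all
    then show ?thesis
      unfolding frame_density_sum_of_squares[OF assms, folded t_def \<alpha>_def] by linarith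
  qed
  also have "\<dots> \<longleftrightarrow> \<alpha> = 1 \<and> t = 1 \<and> c = 0"
    using \<alpha> t L a s by auto
  also have "\<dots> \<longleftrightarrow> a = L\<^sup>2 \<and> b = inverse L \<and> c = 0"
  proof -
    have "t = 1 \<longleftrightarrow> a * b - c\<^sup>2 = L"
      using J L by (auto simp: t_def)
    then show ?thesis
      using a L by (auto simp: \<alpha>_def field_simps power2_eq_square)
  qed
  finally show ?thesis .
qed

lemma gram_det_nonzero_imp_pos:
  fixes u v :: "'a::real_inner"
  assumes "(u \<bullet> u) * (v \<bullet> v) - (u \<bullet> v)\<^sup>2 \<noteq> 0"
  shows "u \<bullet> u > 0" "(u \<bullet> u) * (v \<bullet> v) - (u \<bullet> v)\<^sup>2 > 0"
  using assms Cauchy_Schwarz_ineq[of u v] by (fastforce simp: order_less_le)+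

lemma W_str_in_frame:
  fixes F :: "real^2^3"
  assumes "norm m = 1" "norm mp = 1" "m \<bullet> mp = 0"
  defines "a \<equiv> (F *v m) \<bullet> (F *v m)" and "b \<equiv> (F *v mp) \<bullet> (F *v mp)"
    and "c \<equiv> (F *v m) \<bullet> (F *v mp)"
  shows "W_str s s0 m F =
           (if a * b - c\<^sup>2 \<noteq> 0 then ereal (frame_density (lam s s0) s s0 a b c) else \<infinity>)"
  using rank_eq_ncols_iff_det_gram[of F]
  by (simp add: W_str_def frame_density_def Jf_def[symmetric] fform_def[symmetric]
      Jf_orthonormal_frame[OF assms(1-3)] trace_fform_orthonormal_frame[OF assms(1-3)]
      Cm_eq_inner a_def b_def c_def)

lemma W_str_nonneg:
  assumes "s > -1" "s0 > -1" "norm m = 1" "norm mp = 1" "m \<bullet> mp = 0"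
  shows "0 \<le> W_str s s0 m F"
  using gram_det_nonzero_imp_pos[of "F *v m" "F *v mp"]
    frame_density_nonneg[OF lam_pos[OF assms(1,2)] assms(1) lam_cube[OF assms(1,2)]]
  by (simp add: W_str_in_frame[OF assms(3-5)])

lemma W_str_eq_0_iff:
  assumes "s > -1" "s0 > -1" "norm m = 1" "norm mp = 1" "m \<bullet> mp = 0"
  shows "W_str s s0 m F = 0 \<longleftrightarrow> fform F = gmetric s s0 m mp"
  using gram_det_nonzero_imp_pos[of "F *v m" "F *v mp"] lam_pos[OF assms(1,2)]
    frame_density_eq_0_iff[OF lam_pos[OF assms(1,2)] assms(1) lam_cube[OF assms(1,2)]]
  by (auto simp: W_str_in_frame[OF assms(3-5)] fform_eq_gmetric_iff[OF assms(3-5)])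

lemma W_str_measurable:
  fixes G :: "'a \<Rightarrow> real^2^3"
  assumes "\<And>i j. (\<lambda>x. G x $ i $ j) \<in> borel_measurable M"
    and "\<And>i. (\<lambda>x. m x $ i) \<in> borel_measurable M"
    and "s \<in> borel_measurable M" and "s0 \<in> borel_measurable M"
  shows "(\<lambda>x. W_str (s x) (s0 x) (m x) (G x)) \<in> borel_measurable M"
  unfolding W_str_def rank_eq_ncols_iff_det_gram[where 'n=2, simplified]
  unfolding Jf_def fform_def Cm_def det_2 trace_def sum_2 sum_3 matrix_matrix_mult_def
    transpose_def inner_vec_def matrix_vector_mult_def lam_def vec_lambda_beta
  using assms by measurable

lemma is_H1_grad_grad:
  assumes "H1 \<Omega> y"
  shows "is_H1_grad \<Omega> y (grad \<Omega> y)"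
  using assms unfolding H1_def grad_def by (rule someI_ex)

lemma W_str_grad_measurable:
  assumes "\<Omega> \<in> sets lebesgue" and "Linf_on \<Omega> s" and "Linf_on \<Omega> s0"
    and "(\<lambda>x. indicator \<Omega> x *\<^sub>R m x) \<in> borel_measurable lebesgue" and "H1 \<Omega> y"
  shows "(\<lambda>x. indicator \<Omega> x * e2ennreal (W_str (s x) (s0 x) (m x) (grad \<Omega> y x)))
           \<in> borel_measurable lebesgue"
proof -
  \<comment> \<open>Only the data cut off outside \<open>\<Omega>\<close> are known to be measurable;
    the cut-off leaves the integrand unchanged.\<close>
  define s' where "s' x = indicator \<Omega> x * s x" for x
  define s0' where "s0' x = indicator \<Omega> x * s0 x" for x
  define m' where "m' x = indicator \<Omega> x *\<^sub>R m x" for x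
  define G where "G x = indicator \<Omega> x *\<^sub>R grad \<Omega> y x" for x
  have "(\<lambda>x. G x $ i $ j) \<in> borel_measurable lebesgue" for i j
    using is_H1_grad_grad[OF assms(5)] unfolding is_H1_grad_def L2_on_def G_def by simp
  moreover have "(\<lambda>x. m' x $ i) \<in> borel_measurable lebesgue" for i
    using measurable_compose[OF assms(4) borel_measurable_nth[of i]] unfolding m'_def by simp
  moreover have "s' \<in> borel_measurable lebesgue" "s0' \<in> borel_measurable lebesgue"
    using assms(2,3) unfolding Linf_on_def s'_def s0'_def by auto
  ultimately have W: "(\<lambda>x. W_str (s' x) (s0' x) (m' x) (G x)) \<in> borel_measurable lebesgue"
    by (rule W_str_measurable)
  have eq: "indicator \<Omega> x * e2ennreal (W_str (s x) (s0 x) (m x) (grad \<Omega> y x)) =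
      indicator \<Omega> x * e2ennreal (W_str (s' x) (s0' x) (m' x) (G x))" for x
    by (cases "x \<in> \<Omega>") (simp_all add: s'_def s0'_def m'_def G_def)
  show ?thesis
    unfolding eq using W assms(1) by measurable
qed

lemma E_str_eq_nn_integral:
  assumes "\<forall>x\<in>\<Omega>. \<forall>F. 0 \<le> W_str (s x) (s0 x) (m x) F"
  shows "E_str \<Omega> s s0 m y =
    enn2ereal (\<integral>\<^sup>+ x. indicator \<Omega> x * e2ennreal (W_str (s x) (s0 x) (m x) (grad \<Omega> y x)) \<partial>lebesgue)"
proof -
  have "indicator \<Omega> x * e2ennreal (- W_str (s x) (s0 x) (m x) (grad \<Omega> y x)) = 0" for x
    using assms by (cases "x \<in> \<Omega>") (auto intro: e2ennreal_neg)
  then show ?thesis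
    by (simp add: E_str_def zero_ennreal.rep_eq del: mult_eq_0_iff)
qed

lemma e2ennreal_eq_0_iff:
  fixes x :: ereal
  assumes "0 \<le> x"
  shows "e2ennreal x = 0 \<longleftrightarrow> x = 0"
proof
  assume "e2ennreal x = 0"
  then have "enn2ereal (e2ennreal x) = 0" by (simp add: zero_ennreal.rep_eq)
  then show "x = 0" using assms by (simp add: enn2ereal_e2ennreal)
qed (simp add: e2ennreal_neg)

lemma E_str_eq_0_iff:
  assumes nonneg: "\<forall>x\<in>\<Omega>. \<forall>F. 0 \<le> W_str (s x) (s0 x) (m x) F"
    and meas: "(\<lambda>x. indicator \<Omega> x * e2ennreal (W_str (s x) (s0 x) (m x) (grad \<Omega> y x)))
                 \<in> borel_measurable lebesgue"
  shows "E_str \<Omega> s s0 m y = 0 \<longleftrightarrow>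
    (AE x in lebesgue. x \<in> \<Omega> \<longrightarrow> W_str (s x) (s0 x) (m x) (grad \<Omega> y x) = 0)"
proof -
  have "E_str \<Omega> s s0 m y = 0 \<longleftrightarrow>
      (\<integral>\<^sup>+ x. indicator \<Omega> x * e2ennreal (W_str (s x) (s0 x) (m x) (grad \<Omega> y x)) \<partial>lebesgue) = 0"
    by (simp add: E_str_eq_nn_integral[OF nonneg] enn2ereal_inject[of _ 0, unfolded zero_ennreal.rep_eq])
  also have "\<dots> \<longleftrightarrow>
      (AE x in lebesgue. indicator \<Omega> x * e2ennreal (W_str (s x) (s0 x) (m x) (grad \<Omega> y x)) = 0)"
    using meas by (rule nn_integral_0_iff_AE)
  also have "\<dots> \<longleftrightarrow>
      (AE x in lebesgue. x \<in> \<Omega> \<longrightarrow> W_str (s x) (s0 x) (m x) (grad \<Omega> y x) = 0)"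
  proof (rule AE_cong)
    fix x
    show "indicator \<Omega> x * e2ennreal (W_str (s x) (s0 x) (m x) (grad \<Omega> y x)) = 0 \<longleftrightarrow>
        (x \<in> \<Omega> \<longrightarrow> W_str (s x) (s0 x) (m x) (grad \<Omega> y x) = 0)"
      using nonneg by (cases "x \<in> \<Omega>") (simp_all add: e2ennreal_eq_0_iff)
  qed
  finally show ?thesis .
qed

theorem corollary2p4:
  fixes \<Omega> :: "(real^2) set"
    and s s0 :: "real^2 \<Rightarrow> real"
    and m mp :: "real^2 \<Rightarrow> real^2"
    and y :: "real^2 \<Rightarrow> real^3"
  assumes "bounded_lipschitz_domain \<Omega>"
    and "Linf_on \<Omega> s" and "Linf_on \<Omega> s0"
    and "\<forall>x\<in>\<Omega>. -1 < s x" and "\<forall>x\<in>\<Omega>. -1 < s0 x"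
    and "(\<lambda>x. indicator \<Omega> x *\<^sub>R m x) \<in> borel_measurable lebesgue"
    and "\<forall>x\<in>\<Omega>. norm (m x) = 1"
    and "\<forall>x\<in>\<Omega>. norm (mp x) = 1 \<and> mp x \<bullet> m x = 0"
    and "H1 \<Omega> y"
  shows "(AE x in lebesgue. x \<in> \<Omega> \<longrightarrow>
            transpose (grad \<Omega> y x) ** grad \<Omega> y x = gmetric (s x) (s0 x) (m x) (mp x))
         \<longleftrightarrow> ((\<forall>z. H1 \<Omega> z \<longrightarrow> E_str \<Omega> s s0 m y \<le> E_str \<Omega> s s0 m z) \<and> E_str \<Omega> s s0 m y = 0)"
proof -
  have frame: "s x > -1" "s0 x > -1" "norm (m x) = 1" "norm (mp x) = 1" "m x \<bullet> mp x = 0"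
    if "x \<in> \<Omega>" for x
    using assms(4,5,7,8) that by (auto simp: inner_commute)
  have W_nonneg: "\<forall>x\<in>\<Omega>. \<forall>F. 0 \<le> W_str (s x) (s0 x) (m x) F"
    using W_str_nonneg[OF frame] by blast
  have E_nonneg: "0 \<le> E_str \<Omega> s s0 m z" for z
    unfolding E_str_eq_nn_integral[OF W_nonneg] by (rule enn2ereal_nonneg)
  have "\<Omega> \<in> sets lebesgue"
    using assms(1) by (simp add: bounded_lipschitz_domain_def borel_open)
  have "(AE x in lebesgue. x \<in> \<Omega> \<longrightarrow>
          transpose (grad \<Omega> y x) ** grad \<Omega> y x = gmetric (s x) (s0 x) (m x) (mp x)) \<longleftrightarrow>
        (AE x in lebesgue. x \<in> \<Omega> \<longrightarrow> W_str (s x) (s0 x) (m x) (grad \<Omega> y x) = 0)"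
    using W_str_eq_0_iff[OF frame] by (intro AE_cong) (auto simp: fform_def)
  also have "\<dots> \<longleftrightarrow> E_str \<Omega> s s0 m y = 0"
    using E_str_eq_0_iff[OF W_nonneg W_str_grad_measurable[OF \<open>\<Omega> \<in> sets lebesgue\<close> assms(2,3,6,9)]]
    by simp
  also have "\<dots> \<longleftrightarrow> (\<forall>z. H1 \<Omega> z \<longrightarrow> E_str \<Omega> s s0 m y \<le> E_str \<Omega> s s0 m z) \<and> E_str \<Omega> s s0 m y = 0"
    using E_nonneg by auto
  finally show ?thesis .
qed

end
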